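(* In the general setting of the context, for every $h\in\{0,1,\dots,L-1\}$, $$\mathbb{P}(P_h<P^* )\le\exp\Big(-\frac{\epsilon^2}{4\gamma}\Big)+m\exp\Big(-\frac{\epsilon^2}{6\gamma}\Big).$$
   Context: General setting. Let $m,k,n$ be positive integers and $b\in\mathbb{R}^m_{++}$. Let $\mathcal G$ be the set of proper, concave, upper semicontinuous functions $f:\mathbb{R}^k\to[-\infty,\infty)$ with bounded superlevel sets such that $\mathrm{dom} f\subset\mathbb{R}^k_+$ and $f(0)=0$. Let $f_1,\dots,f_n\in\mathcal G$ and $A_1,\dots,A_n\in\mathbb{R}_+^{m\times k}$. Let $P^*=\sup\{\sum_{t=1}^n f_t(x_t): x_t\in\mathbb{R}^k,\ \sum_{t=1}^n A_tx_t\le b\}$ and assume $P^*>0$. Let $\gamma>0$ satisfy, for every $t\in[n]$: $(A_tx)_i/b_i\le\gamma$ for all $i\in[m]$ and all $x$ with $f_t(x)\ge0$, and $f_t(x)\le\gamma P^*$ for all $x\in\mathrm{dom} f_t$. Let $\epsilon\in(0,1)$ be such that $L=\log_2(1/\epsilon)$ and $n\epsilon$ are integers. Let $\sigma$ be a uniformly random permutation of $[n]$; probabilities are over $\sigma$. For $h\in\{0,\dots,L-1\}$ let $\theta_h=2^{-(h+1)/2}\epsilon^{1/2}$ and $$P_h=\sup\Big\{\tfrac{1}{2^h\epsilon(1-\theta_h)}\sum_{t=1}^{2^hn\epsilon}f_{\sigma(t)}(x_t)\ :\ x_t\in\mathbb{R}^k,\ \tfrac{1}{2^h\epsilon(1+\theta_h)}\sum_{t=1}^{2^hn\epsilon}A_{\sigma(t)}x_t\le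 b\Big\}.$$ *)

theory Defs
  imports "HOL-Analysis.Analysis" "HOL-Probability.Probability"
begin

(* extended-valued functions R^k -> [-inf, inf) are modelled as ereal-valued functions
   that never take the value +inf *)

definition ext_dom :: "('a \<Rightarrow> ereal) \<Rightarrow> 'a set" where
  "ext_dom f = {x. f x \<noteq> -\<infinity>}"

definition concave_ext :: "('a::real_vector \<Rightarrow> ereal) \<Rightarrow> bool" where
  "concave_ext f \<longleftrightarrow> convex {(x, r::real). ereal r \<le> f x}"

definition usc_ext :: "('a::topological_space \<Rightarrow> ereal) \<Rightarrow> bool" where
  "usc_ext f \<longleftrightarrow> (\<forall>x. Limsup (at x) f \<le> f x)"

definition proper_ext :: "('a \<Rightarrow> ereal) \<Rightarrow> bool" where
  "proper_ext f \<longleftrightarrow> (\<forall>x. f x \<noteq> \<infinity>) \<and> ext_dom f \<noteq> {}"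

definition classG :: "(real^'k \<Rightarrow> ereal) set" where
  "classG = {f. proper_ext f \<and> concave_ext f \<and> usc_ext f
              \<and> (\<forall>\<alpha>::real. bounded {x. ereal \<alpha> \<le> f x})
              \<and> (\<forall>x\<in>ext_dom f. \<forall>j. 0 \<le> x $ j)
              \<and> f 0 = 0}"

definition Pstar :: "nat \<Rightarrow> (nat \<Rightarrow> real^'k \<Rightarrow> ereal) \<Rightarrow> (nat \<Rightarrow> real^'k^'m) \<Rightarrow> real^'m \<Rightarrow> ereal" where
  "Pstar n f A b = (SUP x \<in> {x :: nat \<Rightarrow> real^'k. \<forall>i. (\<Sum>t=1..n. A t *v x t) $ i \<le> b $ i}.
                      \<Sum>t=1..n. f t (x t))"

(* P_h for permutation \<sigma>, with l = n*eps *)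
definition theta :: "real \<Rightarrow> nat \<Rightarrow> real" where
  "theta \<epsilon> h = 2 powr (- (real h + 1) / 2) * sqrt \<epsilon>"

definition Ph :: "real \<Rightarrow> nat \<Rightarrow> nat \<Rightarrow> (nat \<Rightarrow> nat) \<Rightarrow> (nat \<Rightarrow> real^'k \<Rightarrow> ereal) \<Rightarrow> (nat \<Rightarrow> real^'k^'m) \<Rightarrow> real^'m \<Rightarrow> ereal" where
  "Ph \<epsilon> l h \<sigma> f A b =
     (SUP x \<in> {x :: nat \<Rightarrow> real^'k. \<forall>i.
          (1 / (2 ^ h * \<epsilon> * (1 + theta \<epsilon> h))) * (\<Sum>t=1..2^h * l. A (\<sigma> t) *v x t) $ i \<le> b $ i}.
        ereal (1 / (2 ^ h * \<epsilon> * (1 - theta \<epsilon> h))) * (\<Sum>t=1..2^h * l. f (\<sigma> t) (x t)))"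

end

theory Submission
  imports Defs
begin

text \<open>
Fix a feasible solution x of the offline problem whose value W is close to P*. Under a uniformly
random order, the first s = 2^h n \<epsilon> arrivals are a sample without replacement, and the sampled
value and the sampled consumption of each resource concentrate around the fraction
q = 2^h \<epsilon> of their totals: prefix products of a random permutation have mean at most the
corresponding power of the mean, so the multiplicative Chernoff bounds of sampling with replacement
apply. Unless the sampled value falls below (1 - \<theta>) q W or some resource exceeds (1 + \<theta>) q b_i,
the restriction of x to the sample is feasible for P_h and has value above W. Since \<theta>^2 q = \<epsilon>^2/2
and all values are at most \<gamma> P*, the two failure probabilities are exp(-\<epsilon>^2 W/(4 \<gamma> P*)) and
exp(-\<epsilon>^2/(6 \<gamma>)); finally let W tend to P*.
\<close>

section \<open>Prefix sums of a random permutation\<close>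

lemma sum_permutes_prefix_prod_swap:
  fixes z :: "nat \<Rightarrow> real"
  assumes "r < u" "u \<le> n"
  shows "(\<Sum>\<sigma> | \<sigma> permutes {1..n}. (\<Prod>t=1..r. z (\<sigma> t)) * z (\<sigma> u))
       = (\<Sum>\<sigma> | \<sigma> permutes {1..n}. (\<Prod>t=1..r. z (\<sigma> t)) * z (\<sigma> (Suc r)))"
proof -
  let ?\<tau> = "Transposition.transpose u (Suc r)"
  have "?\<tau> permutes {1..n}" using assms by (intro permutes_swap_id) auto
  then have "(\<Sum>\<sigma> | \<sigma> permutes {1..n}. (\<Prod>t=1..r. z (\<sigma> t)) * z (\<sigma> u))
      = (\<Sum>\<sigma> | \<sigma> permutes {1..n}. (\<Prod>t=1..r. z ((\<sigma> \<circ> ?\<tau>) t)) * z ((\<sigma> \<circ> ?\<tau>) u))"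
    by (rule sum_permutations_compose_right)
  also have "\<dots> = (\<Sum>\<sigma> | \<sigma> permutes {1..n}. (\<Prod>t=1..r. z (\<sigma> t)) * z (\<sigma> (Suc r)))"
    using assms by (intro sum.cong refl arg_cong2[where f = "(*)"] prod.cong) auto
  finally show ?thesis .
qed

lemma sum_permutes_prefix_prod_next_le:
  fixes z :: "nat \<Rightarrow> real"
  assumes z_nonneg: "\<And>t. t \<in> {1..n} \<Longrightarrow> 0 \<le> z t" and "u \<in> {1..r}" "r < n"
  shows "(\<Sum>\<sigma> | \<sigma> permutes {1..n}. (\<Prod>t=1..r. z (\<sigma> t)) * z (\<sigma> (Suc r)))
       \<le> (\<Sum>\<sigma> | \<sigma> permutes {1..n}. (\<Prod>t=1..r. z (\<sigma> t)) * z (\<sigma> u))"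
proof -
  let ?P = "{\<sigma>. \<sigma> permutes {1..n}}" and ?\<tau> = "Transposition.transpose u (Suc r)"
  define G where "G \<sigma> = (\<Prod>t\<in>{1..r}-{u}. z (\<sigma> t))" for \<sigma> :: "nat \<Rightarrow> nat"
  define D where "D \<sigma> = G \<sigma> * z (\<sigma> u) * (z (\<sigma> u) - z (\<sigma> (Suc r)))" for \<sigma>
  have prefix_prod: "(\<Prod>t=1..r. z (\<sigma> t)) = z (\<sigma> u) * G \<sigma>" for \<sigma>
    unfolding G_def using assms(2) by (simp add: prod.remove)
  have G_nonneg: "0 \<le> G \<sigma>" if "\<sigma> permutes {1..n}" for \<sigma>
    unfolding G_def using that assms(2,3)
    by (intro prod_nonneg z_nonneg permutes_in_image[THEN iffD2, OF that]) auto
  \<comment> \<open>Swapping the positions u and r + 1 turns 2 \<Sum>D into a sum of squares.\<close>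
  have "?\<tau> permutes {1..n}" using assms by (intro permutes_swap_id) auto
  then have "sum D ?P = (\<Sum>\<sigma>\<in>?P. D (\<sigma> \<circ> ?\<tau>))"
    by (rule sum_permutations_compose_right)
  also have "\<dots> = (\<Sum>\<sigma>\<in>?P. G \<sigma> * z (\<sigma> (Suc r)) * (z (\<sigma> (Suc r)) - z (\<sigma> u)))"
  proof (rule sum.cong[OF refl])
    fix \<sigma> :: "nat \<Rightarrow> nat"
    have "G (\<sigma> \<circ> ?\<tau>) = G \<sigma>"
      unfolding G_def using assms(2) by (intro prod.cong) auto
    then show "D (\<sigma> \<circ> ?\<tau>) = G \<sigma> * z (\<sigma> (Suc r)) * (z (\<sigma> (Suc r)) - z (\<sigma> u))"
      unfolding D_def by simp
  qed
  finally have "2 * sum D ?P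
      = (\<Sum>\<sigma>\<in>?P. D \<sigma> + G \<sigma> * z (\<sigma> (Suc r)) * (z (\<sigma> (Suc r)) - z (\<sigma> u)))"
    by (simp add: sum.distrib)
  also have "\<dots> = (\<Sum>\<sigma>\<in>?P. G \<sigma> * (z (\<sigma> u) - z (\<sigma> (Suc r)))\<^sup>2)"
    unfolding D_def by (intro sum.cong refl) (simp add: power2_eq_square algebra_simps)
  also have "\<dots> \<ge> 0" by (intro sum_nonneg mult_nonneg_nonneg G_nonneg) auto
  finally have "0 \<le> sum D ?P" by simp
  then show ?thesis
    unfolding D_def prefix_prod by (simp add: right_diff_distrib sum_subtractf mult_ac)
qed

lemma sum_permutes_prefix_prod_Suc_le:
  fixes z :: "nat \<Rightarrow> real"
  assumes z_nonneg: "\<And>t. t \<in> {1..n} \<Longrightarrow> 0 \<le> z t" and "r < n"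
  shows "(\<Sum>\<sigma> | \<sigma> permutes {1..n}. \<Prod>t=1..Suc r. z (\<sigma> t))
       \<le> (\<Sum>t=1..n. z t) / n * (\<Sum>\<sigma> | \<sigma> permutes {1..n}. \<Prod>t=1..r. z (\<sigma> t))"
proof -
  let ?P = "{\<sigma>. \<sigma> permutes {1..n}}"
  define c where "c u = (\<Sum>\<sigma>\<in>?P. (\<Prod>t=1..r. z (\<sigma> t)) * z (\<sigma> u))" for u
  have c_min: "c (Suc r) \<le> c u" if "u \<in> {1..n}" for u
  proof (cases "u \<le> r")
    case True
    then show ?thesis
      unfolding c_def using that assms by (intro sum_permutes_prefix_prod_next_le) auto
  next
    case False
    then show ?thesis
      unfolding c_def using sum_permutes_prefix_prod_swap[of r u n z] that by simp
  qed
  have sum_c: "(\<Sum>u=1..n. c u) = (\<Sum>t=1..n. z t) * (\<Sum>\<sigma>\<in>?P. \<Prod>t=1..r. z (\<sigma> t))"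
  proof -
    have "(\<Sum>u=1..n. c u) = (\<Sum>\<sigma>\<in>?P. (\<Prod>t=1..r. z (\<sigma> t)) * (\<Sum>u=1..n. z (\<sigma> u)))"
      unfolding c_def sum_distrib_left by (rule sum.swap)
    also have "\<dots> = (\<Sum>\<sigma>\<in>?P. (\<Prod>t=1..r. z (\<sigma> t)) * (\<Sum>t=1..n. z t))"
      by (intro sum.cong refl arg_cong[where f = "(*) _"] sum.permutes_inv) simp
    finally show ?thesis by (simp add: sum_distrib_left mult.commute)
  qed
  have "real n * c (Suc r) \<le> (\<Sum>u=1..n. c u)"
    using sum_mono[of "{1..n}" "\<lambda>_. c (Suc r)" c] c_min by simp
  then have "c (Suc r) \<le> (\<Sum>t=1..n. z t) / n * (\<Sum>\<sigma>\<in>?P. \<Prod>t=1..r. z (\<sigma> t))"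
    using \<open>r < n\<close> unfolding sum_c by (simp add: field_simps)
  then show ?thesis unfolding c_def by (simp add: prod.nat_ivl_Suc')
qed

lemma sum_permutes_prefix_prod_le:
  fixes z :: "nat \<Rightarrow> real"
  assumes z_nonneg: "\<And>t. t \<in> {1..n} \<Longrightarrow> 0 \<le> z t" and "s \<le> n"
  shows "(\<Sum>\<sigma> | \<sigma> permutes {1..n}. \<Prod>t=1..s. z (\<sigma> t)) \<le> fact n * ((\<Sum>t=1..n. z t) / n) ^ s"
  using \<open>s \<le> n\<close>
proof (induction s)
  case 0
  then show ?case by (simp add: card_permutations)
next
  case (Suc s)
  let ?m = "(\<Sum>t=1..n. z t) / n"
  have "0 \<le> ?m" by (intro divide_nonneg_nonneg sum_nonneg z_nonneg) auto
  have "(\<Sum>\<sigma> | \<sigma> permutes {1..n}. \<Prod>t=1..Suc s. z (\<sigma> t))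
      \<le> ?m * (\<Sum>\<sigma> | \<sigma> permutes {1..n}. \<Prod>t=1..s. z (\<sigma> t))"
    using Suc.prems by (intro sum_permutes_prefix_prod_Suc_le z_nonneg) auto
  also have "\<dots> \<le> ?m * (fact n * ?m ^ s)"
    using Suc by (intro mult_left_mono \<open>0 \<le> ?m\<close>) auto
  finally show ?case by (simp add: algebra_simps)
qed

lemma exp_mult_le_chord:
  fixes y M :: real
  assumes "0 \<le> y" "y \<le> M" "0 < M"
  shows "exp (\<eta> * y) \<le> 1 + (exp (\<eta> * M) - 1) * (y / M)"
proof -
  have "exp ((1 - y / M) *\<^sub>R 0 + (y / M) *\<^sub>R (\<eta> * M)) \<le> (1 - y / M) * exp 0 + (y / M) * exp (\<eta> * M)"
    using assms by (intro convex_onD[OF exp_convex]) auto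
  then show ?thesis using assms(3) by (simp add: algebra_simps)
qed

lemma sum_permutes_exp_prefix_sum_le:
  fixes y :: "nat \<Rightarrow> real" and s n :: nat
  assumes y: "\<And>t. t \<in> {1..n} \<Longrightarrow> 0 \<le> y t \<and> y t \<le> M" and "0 < M" "s \<le> n" "0 < n"
  shows "(\<Sum>\<sigma> | \<sigma> permutes {1..n}. exp (\<eta> * (\<Sum>t=1..s. y (\<sigma> t))))
       \<le> fact n * exp ((exp (\<eta> * M) - 1) * (s * (\<Sum>t=1..n. y t) / n) / M)"
proof -
  let ?z = "\<lambda>t. exp (\<eta> * y t)" and ?c = "exp (\<eta> * M) - 1"
  have "(\<Sum>t=1..n. ?z t) \<le> (\<Sum>t=1..n. 1 + ?c * (y t / M))"
    using y \<open>0 < M\<close> by (intro sum_mono exp_mult_le_chord) auto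
  also have "\<dots> = n + ?c * ((\<Sum>t=1..n. y t) / M)"
    by (simp add: sum.distrib sum_distrib_left sum_divide_distrib)
  finally have "(\<Sum>t=1..n. ?z t) / n \<le> 1 + ?c * ((\<Sum>t=1..n. y t) / n / M)"
    using \<open>0 < n\<close> \<open>0 < M\<close> by (simp add: field_simps)
  also have "\<dots> \<le> exp (?c * ((\<Sum>t=1..n. y t) / n / M))"
    by (rule exp_ge_add_one_self)
  finally have mean_le: "(\<Sum>t=1..n. ?z t) / n \<le> exp (?c * ((\<Sum>t=1..n. y t) / n / M))" .
  have "(\<Sum>\<sigma> | \<sigma> permutes {1..n}. exp (\<eta> * (\<Sum>t=1..s. y (\<sigma> t))))
      = (\<Sum>\<sigma> | \<sigma> permutes {1..n}. \<Prod>t=1..s. ?z (\<sigma> t))"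
    by (simp add: sum_distrib_left exp_sum)
  also have "\<dots> \<le> fact n * ((\<Sum>t=1..n. ?z t) / n) ^ s"
    using \<open>s \<le> n\<close> by (intro sum_permutes_prefix_prod_le) auto
  also have "\<dots> \<le> fact n * exp (?c * ((\<Sum>t=1..n. y t) / n / M)) ^ s"
    by (intro mult_left_mono power_mono mean_le) (auto intro!: divide_nonneg_nonneg sum_nonneg)
  also have "\<dots> = fact n * exp (?c * (s * (\<Sum>t=1..n. y t) / n) / M)"
    by (simp add: exp_of_nat_mult[symmetric] algebra_simps)
  finally show ?thesis .
qed

lemma card_filter_mult_le_sum:
  fixes g :: "'a \<Rightarrow> real" and c :: real
  assumes "finite S" "\<And>x. x \<in> S \<Longrightarrow> 0 \<le> g x" "\<And>x. x \<in> S \<Longrightarrow> Q x \<Longrightarrow> c \<le> g x"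
  shows "card {x \<in> S. Q x} * c \<le> sum g S"
proof -
  have "card {x \<in> S. Q x} * c = (\<Sum>x \<in> {x \<in> S. Q x}. c)" by simp
  also have "\<dots> \<le> (\<Sum>x \<in> {x \<in> S. Q x}. g x)" using assms(3) by (intro sum_mono) auto
  also have "\<dots> \<le> sum g S" using assms(1,2) by (intro sum_mono2) auto
  finally show ?thesis .
qed

lemma card_permutes_prefix_sum_exp_tail:
  fixes y :: "nat \<Rightarrow> real" and s n :: nat
  assumes "\<And>t. t \<in> {1..n} \<Longrightarrow> 0 \<le> y t \<and> y t \<le> M" and "0 < M" "s \<le> n" "0 < n"
  shows "card {\<sigma>. \<sigma> permutes {1..n} \<and> a \<le> \<eta> * (\<Sum>t=1..s. y (\<sigma> t))}
       \<le> fact n * exp ((exp (\<eta> * M) - 1) * (s * (\<Sum>t=1..n. y t) / n) / M - a)"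
proof -
  have "card {\<sigma> \<in> {\<sigma>. \<sigma> permutes {1..n}}. a \<le> \<eta> * (\<Sum>t=1..s. y (\<sigma> t))} * exp a
      \<le> (\<Sum>\<sigma> | \<sigma> permutes {1..n}. exp (\<eta> * (\<Sum>t=1..s. y (\<sigma> t))))"
    by (intro card_filter_mult_le_sum) (auto simp: finite_permutations)
  also have "\<dots> \<le> fact n * exp ((exp (\<eta> * M) - 1) * (s * (\<Sum>t=1..n. y t) / n) / M)"
    using assms by (rule sum_permutes_exp_prefix_sum_le)
  finally show ?thesis by (simp add: exp_diff field_simps)
qed

lemma ln_ge_half_diff_inverse:
  fixes y :: real
  assumes "0 < y" "y \<le> 1"
  shows "(y - 1 / y) / 2 \<le> ln y"
proof -
  define g where "g x = ln x - (x - 1 / x) / 2" for x :: real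
  have "g 1 \<le> g y"
  proof (rule DERIV_nonpos_imp_nonincreasing[OF \<open>y \<le> 1\<close>])
    fix x assume "y \<le> x" "x \<le> 1"
    then have "0 < x" using assms by simp
    have "(g has_real_derivative (1 / x - (1 + 1 / x\<^sup>2) / 2)) (at x)"
      unfolding g_def using \<open>0 < x\<close>
      by (auto intro!: derivative_eq_intros simp: field_simps power2_eq_square)
    moreover have "1 / x - (1 + 1 / x\<^sup>2) / 2 = - ((x - 1)\<^sup>2 / (2 * x\<^sup>2))"
      using \<open>0 < x\<close> by (simp add: field_simps power2_eq_square)
    ultimately show "\<exists>d. (g has_real_derivative d) (at x) \<and> d \<le> 0"
      by (metis neg_le_0_iff_le zero_le_divide_iff zero_le_power2 zero_le_mult_iff zero_le_numeral)
  qed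
  then show ?thesis unfolding g_def by simp
qed

lemma ln_one_plus_ge:
  fixes x :: real
  assumes "0 \<le> x"
  shows "2 * x / (2 + x) \<le> ln (1 + x)"
proof -
  define g where "g u = ln (1 + u) - 2 * u / (2 + u)" for u :: real
  have "g 0 \<le> g x"
  proof (rule DERIV_nonneg_imp_nondecreasing[OF assms])
    fix u :: real assume "0 \<le> u" "u \<le> x"
    have "(g has_real_derivative (1 / (1 + u) - 4 / (2 + u)\<^sup>2)) (at u)"
      unfolding g_def using \<open>0 \<le> u\<close>
      by (auto intro!: derivative_eq_intros simp: field_simps power2_eq_square)
    moreover have "4 / (2 + u)\<^sup>2 \<le> 1 / (1 + u)"
      using \<open>0 \<le> u\<close> by (simp add: divide_simps power2_eq_square algebra_simps)
    ultimately show "\<exists>d. (g has_real_derivative d) (at u) \<and> 0 \<le> d"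
      by auto
  qed
  then show ?thesis unfolding g_def by simp
qed

lemma chernoff_lower_exponent_le:
  fixes \<theta> :: real
  assumes "0 < \<theta>" "\<theta> < 1"
  shows "- \<theta> - (1 - \<theta>) * ln (1 - \<theta>) \<le> - (\<theta>\<^sup>2 / 2)"
proof -
  have "(1 - \<theta>) * (((1 - \<theta>) - 1 / (1 - \<theta>)) / 2) \<le> (1 - \<theta>) * ln (1 - \<theta>)"
    using assms by (intro mult_left_mono ln_ge_half_diff_inverse) auto
  moreover have "(1 - \<theta>) * (((1 - \<theta>) - 1 / (1 - \<theta>)) / 2) = \<theta>\<^sup>2 / 2 - \<theta>"
    using assms by (simp add: field_simps power2_eq_square)
  ultimately show ?thesis by linarith
qed

lemma chernoff_upper_exponent_le:
  fixes \<theta> :: real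
  assumes "0 < \<theta>" "\<theta> \<le> 1"
  shows "\<theta> - (1 + \<theta>) * ln (1 + \<theta>) \<le> - (\<theta>\<^sup>2 / 3)"
proof -
  have "(1 + \<theta>) * (2 * \<theta> / (2 + \<theta>)) \<le> (1 + \<theta>) * ln (1 + \<theta>)"
    using assms by (intro mult_left_mono ln_one_plus_ge) auto
  moreover have "\<theta> + \<theta>\<^sup>2 / 3 \<le> (1 + \<theta>) * (2 * \<theta> / (2 + \<theta>))"
    using assms by (simp add: field_simps power2_eq_square)
  ultimately show ?thesis by simp
qed

lemma card_permutes_prefix_sum_lower_tail:
  fixes y :: "nat \<Rightarrow> real" and s n :: nat
  assumes "\<And>t. t \<in> {1..n} \<Longrightarrow> 0 \<le> y t \<and> y t \<le> M" and "0 < M" "s \<le> n" "0 < n"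
    and "0 < \<theta>" "\<theta> < 1" and \<mu>_def: "\<mu> = s * (\<Sum>t=1..n. y t) / n"
  shows "card {\<sigma>. \<sigma> permutes {1..n} \<and> (\<Sum>t=1..s. y (\<sigma> t)) \<le> (1 - \<theta>) * \<mu>}
       \<le> fact n * exp (- (\<theta>\<^sup>2 * \<mu> / (2 * M)))"
proof -
  define \<eta> where "\<eta> = ln (1 - \<theta>) / M"
  have "\<eta> \<le> 0" "exp (\<eta> * M) = 1 - \<theta>"
    unfolding \<eta>_def using assms(2,5,6) by (auto simp: divide_nonpos_pos)
  have "0 \<le> \<mu>"
    unfolding \<mu>_def using assms(1) by (intro divide_nonneg_nonneg mult_nonneg_nonneg sum_nonneg) auto
  have "{\<sigma>. \<sigma> permutes {1..n} \<and> (\<Sum>t=1..s. y (\<sigma> t)) \<le> (1 - \<theta>) * \<mu>}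
      \<subseteq> {\<sigma>. \<sigma> permutes {1..n} \<and> \<eta> * ((1 - \<theta>) * \<mu>) \<le> \<eta> * (\<Sum>t=1..s. y (\<sigma> t))}"
    using \<open>\<eta> \<le> 0\<close> by (auto intro: mult_left_mono_neg)
  then have "card {\<sigma>. \<sigma> permutes {1..n} \<and> (\<Sum>t=1..s. y (\<sigma> t)) \<le> (1 - \<theta>) * \<mu>}
      \<le> card {\<sigma>. \<sigma> permutes {1..n} \<and> \<eta> * ((1 - \<theta>) * \<mu>) \<le> \<eta> * (\<Sum>t=1..s. y (\<sigma> t))}"
    by (intro card_mono) (auto simp: finite_permutations)
  also have "\<dots> \<le> fact n * exp ((exp (\<eta> * M) - 1) * \<mu> / M - \<eta> * ((1 - \<theta>) * \<mu>))"
    using card_permutes_prefix_sum_exp_tail[OF assms(1-4)] by (simp only: \<mu>_def)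
  also have "\<dots> = fact n * exp ((- \<theta> - (1 - \<theta>) * ln (1 - \<theta>)) * (\<mu> / M))"
    unfolding \<open>exp (\<eta> * M) = 1 - \<theta>\<close> unfolding \<eta>_def using assms(2) by (simp add: field_simps)
  also have "\<dots> \<le> fact n * exp (- (\<theta>\<^sup>2 / 2) * (\<mu> / M))"
    using mult_right_mono[OF chernoff_lower_exponent_le[OF assms(5,6)], of "\<mu> / M"] \<open>0 \<le> \<mu>\<close> assms(2)
    by simp
  finally show ?thesis by simp
qed

lemma card_permutes_prefix_sum_upper_tail:
  fixes y :: "nat \<Rightarrow> real" and s n :: nat
  assumes "\<And>t. t \<in> {1..n} \<Longrightarrow> 0 \<le> y t \<and> y t \<le> M" and "0 < M" "s \<le> n" "0 < n"
    and "0 < \<theta>" "\<theta> \<le> 1" and "s * (\<Sum>t=1..n. y t) / n \<le> \<mu>"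
  shows "card {\<sigma>. \<sigma> permutes {1..n} \<and> (1 + \<theta>) * \<mu> \<le> (\<Sum>t=1..s. y (\<sigma> t))}
       \<le> fact n * exp (- (\<theta>\<^sup>2 * \<mu> / (3 * M)))"
proof -
  define \<eta> where "\<eta> = ln (1 + \<theta>) / M"
  have "0 \<le> \<eta>" "exp (\<eta> * M) = 1 + \<theta>" unfolding \<eta>_def using assms(2,5) by auto
  have "0 \<le> s * (\<Sum>t=1..n. y t) / n"
    using assms(1) by (intro divide_nonneg_nonneg mult_nonneg_nonneg sum_nonneg) auto
  with assms(7) have "0 \<le> \<mu>" by linarith
  have "{\<sigma>. \<sigma> permutes {1..n} \<and> (1 + \<theta>) * \<mu> \<le> (\<Sum>t=1..s. y (\<sigma> t))}
      \<subseteq> {\<sigma>. \<sigma> permutes {1..n} \<and> \<eta> * ((1 + \<theta>) * \<mu>) \<le> \<eta> * (\<Sum>t=1..s. y (\<sigma> t))}"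
    using \<open>0 \<le> \<eta>\<close> by (auto intro: mult_left_mono)
  then have "card {\<sigma>. \<sigma> permutes {1..n} \<and> (1 + \<theta>) * \<mu> \<le> (\<Sum>t=1..s. y (\<sigma> t))}
      \<le> card {\<sigma>. \<sigma> permutes {1..n} \<and> \<eta> * ((1 + \<theta>) * \<mu>) \<le> \<eta> * (\<Sum>t=1..s. y (\<sigma> t))}"
    by (intro card_mono) (auto simp: finite_permutations)
  also have "\<dots> \<le> fact n * exp ((exp (\<eta> * M) - 1) * (s * (\<Sum>t=1..n. y t) / n) / M - \<eta> * ((1 + \<theta>) * \<mu>))"
    by (rule card_permutes_prefix_sum_exp_tail[OF assms(1-4)])
  also have "\<dots> \<le> fact n * exp ((exp (\<eta> * M) - 1) * \<mu> / M - \<eta> * ((1 + \<theta>) * \<mu>))"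
    using divide_right_mono[OF mult_left_mono[OF assms(7), of \<theta>], of M] assms(2,5)
    unfolding \<open>exp (\<eta> * M) = 1 + \<theta>\<close> by simp
  also have "\<dots> = fact n * exp ((\<theta> - (1 + \<theta>) * ln (1 + \<theta>)) * (\<mu> / M))"
    unfolding \<open>exp (\<eta> * M) = 1 + \<theta>\<close> unfolding \<eta>_def using assms(2) by (simp add: field_simps)
  also have "\<dots> \<le> fact n * exp (- (\<theta>\<^sup>2 / 3) * (\<mu> / M))"
    using mult_right_mono[OF chernoff_upper_exponent_le[OF assms(5,6)], of "\<mu> / M"] \<open>0 \<le> \<mu>\<close> assms(2)
    by simp
  finally show ?thesis by simp
qed

section \<open>The offline optimum\<close>

lemma usc_ext_bounded_above_on_compact:
  fixes f :: "'a::topological_space \<Rightarrow> ereal"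
  assumes "usc_ext f" "\<And>x. f x \<noteq> \<infinity>" "compact S"
  obtains M where "\<And>x. x \<in> S \<Longrightarrow> f x \<le> ereal M"
proof -
  define c where "c x = (if f x = -\<infinity> then 0 else real_of_ereal (f x) + 1)" for x
  have f_less_c: "f x < ereal (c x)" for x
    using assms(2)[of x] unfolding c_def by (cases "f x") auto
  have "\<exists>U. open U \<and> x \<in> U \<and> (\<forall>y\<in>U. f y < ereal (c x))" for x
  proof -
    have "Limsup (at x) f < ereal (c x)"
      using assms(1) f_less_c unfolding usc_ext_def by (meson le_less_trans)
    then have "eventually (\<lambda>y. f y < ereal (c x)) (at x)" by (rule Limsup_lessD)
    then obtain U where "open U" "x \<in> U" "\<forall>y\<in>U. y \<noteq> x \<longrightarrow> f y < ereal (c x)"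
      unfolding eventually_at_topological by auto
    then show ?thesis using f_less_c by metis
  qed
  then obtain U where U: "\<And>x. open (U x) \<and> x \<in> U x \<and> (\<forall>y\<in>U x. f y < ereal (c x))"
    by metis
  moreover have "S \<subseteq> (\<Union>x\<in>S. U x)" using U by blast
  ultimately obtain C where C: "C \<subseteq> S" "finite C" "S \<subseteq> (\<Union>x\<in>C. U x)"
    using compactE_image[OF assms(3), of S U] by metis
  have "f y \<le> ereal (Max (c ` C))" if "y \<in> S" for y
  proof -
    obtain x where "x \<in> C" "y \<in> U x" using C \<open>y \<in> S\<close> by blast
    then have "f y < ereal (c x)" "c x \<le> Max (c ` C)" using U C by auto
    then show ?thesis by (meson less_imp_le order_trans ereal_less_eq(3))
  qed
  then show ?thesis using that by blast
qed

lemma classG_bounded_above: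
  fixes f :: "real^'k \<Rightarrow> ereal"
  assumes "f \<in> classG"
  obtains M where "\<And>x. f x \<le> ereal M"
proof -
  let ?S = "closure {x. ereal 0 \<le> f x}"
  have usc: "usc_ext f" and finite_values: "\<And>x. f x \<noteq> \<infinity>" and "bounded {x. ereal 0 \<le> f x}"
    using assms unfolding classG_def proper_ext_def by auto
  then have "compact ?S" by (simp add: compact_closure)
  then obtain M where M: "\<And>x. x \<in> ?S \<Longrightarrow> f x \<le> ereal M"
    using usc_ext_bounded_above_on_compact[OF usc finite_values] by blast
  have "f x \<le> ereal (max M 0)" for x
  proof (cases "ereal 0 \<le> f x")
    case True
    then have "f x \<le> ereal M" using M[OF closure_subset[THEN subsetD]] by simp
    then show ?thesis by (simp add: le_max_iff_disj)
  next
    case False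
    then have "f x \<le> ereal 0" by (meson linear)
    then show ?thesis by (meson order_trans ereal_less_eq(3) max.cobounded2)
  qed
  then show ?thesis using that by blast
qed

lemma Pstar_less_infinity:
  assumes "\<forall>t\<in>{1..n}. f t \<in> classG"
  shows "Pstar n f A b < \<infinity>"
proof -
  have "\<forall>t\<in>{1..n}. \<exists>M. \<forall>x. f t x \<le> ereal M"
    using assms by (meson classG_bounded_above)
  then obtain M where M: "\<And>t x. t \<in> {1..n} \<Longrightarrow> f t x \<le> ereal (M t)"
    by metis
  have "Pstar n f A b \<le> ereal (\<Sum>t=1..n. M t)"
    unfolding Pstar_def
  proof (rule SUP_least)
    fix x :: "nat \<Rightarrow> real^'a"
    have "(\<Sum>t=1..n. f t (x t)) \<le> (\<Sum>t=1..n. ereal (M t))" using M by (intro sum_mono) auto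
    then show "(\<Sum>t=1..n. f t (x t)) \<le> ereal (\<Sum>t=1..n. M t)" by simp
  qed
  then show ?thesis by (rule le_less_trans) simp
qed

lemma sum_ereal_greater_imp_neq_minf:
  fixes g :: "'a \<Rightarrow> ereal"
  assumes "finite I" "\<forall>j\<in>I. g j \<noteq> \<infinity>" "ereal V < (\<Sum>j\<in>I. g j)" "i \<in> I"
  shows "g i \<noteq> -\<infinity>"
proof
  assume "g i = -\<infinity>"
  moreover have "(\<Sum>j\<in>I-{i}. g j) \<noteq> \<infinity>"
    using assms(2) by (subst sum_Pinfty) auto
  ultimately have "(\<Sum>j\<in>I. g j) = -\<infinity>"
    using assms(1,4) by (simp add: sum.remove)
  then show False using assms(3) by simp
qed

lemma Pstar_nonneg_solution_above:
  fixes f :: "nat \<Rightarrow> real^'k \<Rightarrow> ereal" and A :: "nat \<Rightarrow> real^'k^'m"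
  assumes fG: "\<forall>t\<in>{1..n}. f t \<in> classG" and A_nonneg: "\<forall>t\<in>{1..n}. \<forall>i j. 0 \<le> A t $ i $ j"
    and "ereal V < Pstar n f A b"
  obtains x v where "\<forall>i. (\<Sum>t=1..n. A t *v x t) $ i \<le> b $ i"
    and "\<forall>t\<in>{1..n}. f t (x t) = ereal (v t) \<and> 0 \<le> v t"
    and "\<forall>t\<in>{1..n}. \<forall>i. 0 \<le> (A t *v x t) $ i"
    and "V < (\<Sum>t=1..n. v t)"
proof -
  obtain x where feasible: "\<forall>i. (\<Sum>t=1..n. A t *v x t) $ i \<le> b $ i"
    and above: "ereal V < (\<Sum>t=1..n. f t (x t))"
    using assms(3) unfolding Pstar_def less_SUP_iff by blast
  have classG_t: "(\<forall>y. f t y \<noteq> \<infinity>) \<and> (\<forall>y\<in>ext_dom (f t). \<forall>j. 0 \<le> y $ j) \<and> f t 0 = 0"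
    if "t \<in> {1..n}" for t
    using fG that unfolding classG_def proper_ext_def by auto
  have "f t (x t) \<noteq> -\<infinity>" if "t \<in> {1..n}" for t
    using sum_ereal_greater_imp_neq_minf[OF _ _ above that] classG_t by auto
  then have A_x_nonneg: "0 \<le> (A t *v x t) $ i" if "t \<in> {1..n}" for t i
    using classG_t[OF that] A_nonneg that unfolding ext_dom_def matrix_vector_mult_def
    by (auto intro!: sum_nonneg mult_nonneg_nonneg)
  \<comment> \<open>The concentration bounds need nonnegative values, so points of negative value are replaced by 0.\<close>
  define x' where "x' t = (if 0 \<le> f t (x t) then x t else 0)" for t
  define v where "v t = real_of_ereal (f t (x' t))" for t
  have x'_le: "(A t *v x' t) $ i \<le> (A t *v x t) $ i" "0 \<le> (A t *v x' t) $ i"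
    if "t \<in> {1..n}" for t i
    using A_x_nonneg[OF that] unfolding x'_def by auto
  have x'_feasible: "\<forall>i. (\<Sum>t=1..n. A t *v x' t) $ i \<le> b $ i"
  proof
    fix i
    have "(\<Sum>t=1..n. A t *v x' t) $ i \<le> (\<Sum>t=1..n. A t *v x t) $ i"
      unfolding sum_component using x'_le by (intro sum_mono) auto
    then show "(\<Sum>t=1..n. A t *v x' t) $ i \<le> b $ i" using feasible by (meson order_trans)
  qed
  have x'_improves: "f t (x t) \<le> f t (x' t)" "0 \<le> f t (x' t)" if "t \<in> {1..n}" for t
    using classG_t[OF that] unfolding x'_def by auto
  have x'_value: "f t (x' t) = ereal (v t)" "0 \<le> v t" if "t \<in> {1..n}" for t
    using classG_t[OF that] x'_improves(2)[OF that] unfolding v_def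
    by (auto intro: real_of_ereal_pos simp: ereal_real)
  have "V < (\<Sum>t=1..n. v t)"
  proof -
    have "ereal V < (\<Sum>t=1..n. f t (x' t))"
      using above x'_improves(1) by (meson order_less_le_trans sum_mono)
    also have "\<dots> = ereal (\<Sum>t=1..n. v t)" using x'_value(1) by simp
    finally show ?thesis by simp
  qed
  with x'_feasible x'_value x'_le(2) show ?thesis by (intro that[of x' v]) auto
qed

section \<open>Concentration of the sampled problem\<close>

lemma two_pow_mult_le_one:
  fixes \<epsilon> :: real
  assumes "0 < \<epsilon>" "real L = log 2 (1 / \<epsilon>)" "h < L"
  shows "2 ^ h * \<epsilon> \<le> 1"
proof -
  have "(2::real) ^ h \<le> 2 ^ L" using assms(3) by (intro power_increasing) auto
  also have "\<dots> = 2 powr log 2 (1 / \<epsilon>)" unfolding assms(2)[symmetric] by (simp add: powr_realpow)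
  also have "\<dots> = 1 / \<epsilon>" using assms(1) by simp
  finally show ?thesis using assms(1) by (simp add: field_simps)
qed

lemma theta_pos: "0 < \<epsilon> \<Longrightarrow> 0 < theta \<epsilon> h"
  unfolding theta_def by simp

lemma theta_squared: "0 \<le> \<epsilon> \<Longrightarrow> (theta \<epsilon> h)\<^sup>2 = \<epsilon> / 2 ^ Suc h"
proof -
  assume "0 \<le> \<epsilon>"
  have "(2 powr (- (real h + 1) / 2))\<^sup>2 = 2 powr (- real (Suc h))"
    unfolding power2_eq_square powr_add[symmetric] by (rule arg_cong[where f = "(powr) 2"]) simp
  also have "\<dots> = 1 / 2 ^ Suc h" by (simp only: powr_minus_divide powr_realpow[OF zero_less_numeral])
  finally show ?thesis
    unfolding theta_def using \<open>0 \<le> \<epsilon>\<close> by (simp add: power_mult_distrib)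
qed

lemma theta_less_one: "0 < \<epsilon> \<Longrightarrow> \<epsilon> < 1 \<Longrightarrow> theta \<epsilon> h < 1"
proof -
  assume "0 < \<epsilon>" "\<epsilon> < 1"
  have "(1::real) \<le> 2 ^ Suc h" by (rule one_le_power) simp
  then have "(theta \<epsilon> h)\<^sup>2 < 1"
    using \<open>0 < \<epsilon>\<close> \<open>\<epsilon> < 1\<close> by (simp add: theta_squared divide_less_eq)
  then show ?thesis using theta_pos[OF \<open>0 < \<epsilon>\<close>, of h] by (simp add: abs_square_less_1)
qed

lemma card_le_card_Un_sum_card_UN:
  fixes F :: "'i::finite \<Rightarrow> 'a set"
  assumes "X \<subseteq> E \<union> (\<Union>i. F i)" "finite E" "\<And>i. finite (F i)"
  shows "real (card X) \<le> card E + (\<Sum>i\<in>UNIV. real (card (F i)))"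
proof -
  have "card X \<le> card (E \<union> (\<Union>i. F i))" using assms by (intro card_mono) auto
  also have "\<dots> \<le> card E + card (\<Union>i. F i)" by (rule card_Un_le)
  also have "\<dots> \<le> card E + (\<Sum>i\<in>UNIV. card (F i))" by (intro add_left_mono card_UN_le) simp
  finally show ?thesis using of_nat_mono[where 'a = real] by fastforce
qed

lemma sample_size:
  assumes "real l = real n * \<epsilon>" "2 ^ h * \<epsilon> \<le> 1"
  shows "real (2 ^ h * l) = 2 ^ h * \<epsilon> * n" "2 ^ h * l \<le> n"
proof -
  show eq: "real (2 ^ h * l) = 2 ^ h * \<epsilon> * n" using assms(1) by simp
  have "2 ^ h * \<epsilon> * n \<le> 1 * real n" by (rule mult_right_mono[OF assms(2)]) simp
  then have "real (2 ^ h * l) \<le> real n" unfolding eq by simp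
  then show "2 ^ h * l \<le> n" by (simp only: of_nat_le_iff)
qed

lemma Ph_gt_of_sample:
  fixes x :: "nat \<Rightarrow> real^'k" and f :: "nat \<Rightarrow> real^'k \<Rightarrow> ereal" and A :: "nat \<Rightarrow> real^'k^'m"
  assumes "0 < \<epsilon>" "\<epsilon> < 1" "\<sigma> permutes {1..n}" "2 ^ h * l \<le> n"
    and values_eq: "\<forall>t\<in>{1..n}. f t (x t) = ereal (v t)"
    and value_large: "(1 - theta \<epsilon> h) * (2^h * \<epsilon> * W) < (\<Sum>t=1..2^h*l. v (\<sigma> t))"
    and resources_small:
      "\<forall>i. (\<Sum>t=1..2^h*l. (A (\<sigma> t) *v x (\<sigma> t)) $ i) < (1 + theta \<epsilon> h) * (2^h * \<epsilon> * b $ i)"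
  shows "ereal W < Ph \<epsilon> l h \<sigma> f A b"
proof -
  let ?c = "2 ^ h * \<epsilon> * (1 + theta \<epsilon> h)" and ?d = "2 ^ h * \<epsilon> * (1 - theta \<epsilon> h)"
  have "0 < ?c" "0 < ?d"
    using assms(1) theta_pos[OF assms(1), of h] theta_less_one[OF assms(1,2), of h] by auto
  have feasible: "(1 / ?c) * (\<Sum>t=1..2^h*l. A (\<sigma> t) *v x (\<sigma> t)) $ i \<le> b $ i" for i
    using resources_small \<open>0 < ?c\<close> by (simp add: sum_component field_simps less_imp_le)
  let ?S = "\<Sum>t=1..2^h*l. v (\<sigma> t)"
  have "?d * W < ?S" using value_large by (simp add: mult_ac)
  then have "W < ?S / ?d" using \<open>0 < ?d\<close> by (simp add: pos_less_divide_eq mult.commute)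
  then have "ereal W < ereal (1 / ?d) * ereal ?S" by simp
  also have "ereal ?S = (\<Sum>t=1..2^h*l. f (\<sigma> t) (x (\<sigma> t)))"
    using values_eq permutes_in_image[OF assms(3)] assms(4) by simp
  also have "ereal (1 / ?d) * \<dots> \<le> Ph \<epsilon> l h \<sigma> f A b"
    unfolding Ph_def by (rule SUP_upper) (use feasible in simp)
  finally show ?thesis .
qed

lemma card_Ph_le_solution_value:
  fixes x :: "nat \<Rightarrow> real^'k" and f :: "nat \<Rightarrow> real^'k \<Rightarrow> ereal" and A :: "nat \<Rightarrow> real^'k^'m"
  assumes "0 < n" "real l = real n * \<epsilon>" "0 < \<epsilon>" "\<epsilon> < 1" "2 ^ h * \<epsilon> \<le> 1"
    and "0 < \<gamma>" "0 < P" "\<forall>i. 0 < b $ i"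
    and solution_values: "\<forall>t\<in>{1..n}. f t (x t) = ereal (v t) \<and> 0 \<le> v t \<and> v t \<le> \<gamma> * P"
    and solution_resources: "\<forall>t\<in>{1..n}. \<forall>i. 0 \<le> (A t *v x t) $ i \<and> (A t *v x t) $ i \<le> \<gamma> * b $ i"
    and feasible: "\<forall>i. (\<Sum>t=1..n. A t *v x t) $ i \<le> b $ i"
  shows "card {\<sigma>. \<sigma> permutes {1..n} \<and> Ph \<epsilon> l h \<sigma> f A b \<le> ereal (\<Sum>t=1..n. v t)}
       \<le> fact n * (exp (- (\<epsilon>\<^sup>2 * (\<Sum>t=1..n. v t) / (4 * \<gamma> * P)))
                   + CARD('m) * exp (- (\<epsilon>\<^sup>2 / (6 * \<gamma>))))"
proof -
  define s where "s = 2 ^ h * l"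
  define q where "q = 2 ^ h * \<epsilon>"
  define \<theta> where "\<theta> = theta \<epsilon> h"
  define W where "W = (\<Sum>t=1..n. v t)"
  have s_eq: "real s = q * n" and "s \<le> n"
    unfolding s_def q_def using sample_size[OF assms(2,5)] by auto
  have "0 < \<theta>" "\<theta> < 1"
    unfolding \<theta>_def using assms(3,4) theta_pos theta_less_one by auto
  have eps_squared: "\<epsilon>\<^sup>2 = 2 * (\<theta>\<^sup>2 * q)"
    unfolding q_def \<theta>_def theta_squared[OF less_imp_le[OF assms(3)]] by (simp add: power2_eq_square)
  define E\<^sub>1 where "E\<^sub>1 = {\<sigma>. \<sigma> permutes {1..n} \<and> (\<Sum>t=1..s. v (\<sigma> t)) \<le> (1 - \<theta>) * (q * W)}"
  define E\<^sub>2 where "E\<^sub>2 i =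
    {\<sigma>. \<sigma> permutes {1..n} \<and> (1 + \<theta>) * (q * b $ i) \<le> (\<Sum>t=1..s. (A (\<sigma> t) *v x (\<sigma> t)) $ i)}" for i
  have "{\<sigma>. \<sigma> permutes {1..n} \<and> Ph \<epsilon> l h \<sigma> f A b \<le> ereal W} \<subseteq> E\<^sub>1 \<union> (\<Union>i. E\<^sub>2 i)"
  proof (rule subsetI, rule ccontr)
    fix \<sigma> assume \<sigma>: "\<sigma> \<in> {\<sigma>. \<sigma> permutes {1..n} \<and> Ph \<epsilon> l h \<sigma> f A b \<le> ereal W}"
      and "\<sigma> \<notin> E\<^sub>1 \<union> (\<Union>i. E\<^sub>2 i)"
    then have "ereal W < Ph \<epsilon> l h \<sigma> f A b"
      using solution_values \<open>s \<le> n\<close> unfolding E\<^sub>1_def E\<^sub>2_def s_def q_def \<theta>_def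
      by (intro Ph_gt_of_sample[OF assms(3,4)]) (auto simp: not_le)
    with \<sigma> show False by (simp add: not_le[symmetric])
  qed
  then have union_bound: "real (card {\<sigma>. \<sigma> permutes {1..n} \<and> Ph \<epsilon> l h \<sigma> f A b \<le> ereal W})
      \<le> card E\<^sub>1 + (\<Sum>i\<in>UNIV. real (card (E\<^sub>2 i)))"
    by (rule card_le_card_Un_sum_card_UN) (simp_all add: E\<^sub>1_def E\<^sub>2_def finite_permutations)
  have "card E\<^sub>1 \<le> fact n * exp (- (\<theta>\<^sup>2 * (q * W) / (2 * (\<gamma> * P))))"
    unfolding E\<^sub>1_def using solution_values assms(1,6,7) \<open>s \<le> n\<close> \<open>0 < \<theta>\<close> \<open>\<theta> < 1\<close>
    by (intro card_permutes_prefix_sum_lower_tail) (auto simp: s_eq W_def)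
  also have "\<dots> = fact n * exp (- (\<epsilon>\<^sup>2 * W / (4 * \<gamma> * P)))"
    unfolding eps_squared by (simp add: field_simps)
  finally have E\<^sub>1_bound: "card E\<^sub>1 \<le> fact n * exp (- (\<epsilon>\<^sup>2 * W / (4 * \<gamma> * P)))" .
  have E\<^sub>2_bound: "card (E\<^sub>2 i) \<le> fact n * exp (- (\<epsilon>\<^sup>2 / (6 * \<gamma>)))" for i
  proof -
    have "s * (\<Sum>t=1..n. (A t *v x t) $ i) / n \<le> q * b $ i"
      using feasible assms(1) \<open>0 < \<theta>\<close> s_eq q_def assms(3)
      by (simp add: sum_component mult_left_mono)
    then have "card (E\<^sub>2 i) \<le> fact n * exp (- (\<theta>\<^sup>2 * (q * b $ i) / (3 * (\<gamma> * b $ i))))"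
      unfolding E\<^sub>2_def using solution_resources assms(1,6,8) \<open>s \<le> n\<close> \<open>0 < \<theta>\<close> \<open>\<theta> < 1\<close>
      by (intro card_permutes_prefix_sum_upper_tail[where y = "\<lambda>t. (A t *v x t) $ i"]) auto
    also have "\<dots> = fact n * exp (- (\<epsilon>\<^sup>2 / (6 * \<gamma>)))"
      unfolding eps_squared using assms(8) by (simp add: field_simps less_imp_neq[symmetric])
    finally show ?thesis .
  qed
  have "card E\<^sub>1 + (\<Sum>i\<in>UNIV. real (card (E\<^sub>2 i)))
      \<le> fact n * exp (- (\<epsilon>\<^sup>2 * W / (4 * \<gamma> * P))) + (\<Sum>i\<in>(UNIV::'m set). fact n * exp (- (\<epsilon>\<^sup>2 / (6 * \<gamma>))))"
    by (intro add_mono sum_mono E\<^sub>1_bound E\<^sub>2_bound)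
  with union_bound show ?thesis
    unfolding W_def by (simp add: algebra_simps)
qed

lemma finite_less_ereal_obtains_bound:
  fixes \<phi> :: "'a \<Rightarrow> ereal"
  assumes "finite S" "\<forall>x\<in>S. \<phi> x < ereal P"
  obtains c where "c < P" "\<forall>x\<in>S. \<phi> x \<le> ereal c"
proof -
  from assms have "\<exists>c<P. \<forall>x\<in>S. \<phi> x \<le> ereal c"
  proof (induction S rule: finite_induct)
    case empty
    show ?case by (intro exI[of _ "P - 1"]) simp
  next
    case (insert y S)
    then obtain c where "c < P" and c: "\<forall>x\<in>S. \<phi> x \<le> ereal c" by auto
    show ?case
    proof (cases "\<phi> y")
      case (real r)
      then have "r < P" using insert.prems by simp
      with \<open>c < P\<close> c show ?thesis
        using real by (intro exI[of _ "max c r"]) (auto intro: order_trans)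
    qed (use insert.prems \<open>c < P\<close> c in auto)
  qed
  then show ?thesis using that by blast
qed

lemma le_limit_at_left:
  fixes g :: "real \<Rightarrow> real"
  assumes "a < x" "\<And>y. a < y \<Longrightarrow> y < x \<Longrightarrow> c \<le> g y" "(g \<longlongrightarrow> g x) (at_left x)"
  shows "c \<le> g x"
proof (rule tendsto_le[OF trivial_limit_at_left_real assms(3) tendsto_const])
  show "\<forall>\<^sub>F y in at_left x. c \<le> g y"
    using eventually_at_left_real[OF assms(1)] by eventually_elim (use assms(2) in auto)
qed

context
  fixes n l h :: nat and \<epsilon> \<gamma> P :: real
    and f :: "nat \<Rightarrow> real^'k \<Rightarrow> ereal" and A :: "nat \<Rightarrow> real^'k^'m" and b :: "real^'m"
  assumes n_pos: "0 < n"
    and b_pos: "\<forall>i. 0 < b $ i"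
    and fG: "\<forall>t\<in>{1..n}. f t \<in> classG"
    and A_nonneg: "\<forall>t\<in>{1..n}. \<forall>i j. 0 \<le> A t $ i $ j"
    and gamma_pos: "0 < \<gamma>"
    and gamma_A: "\<forall>t\<in>{1..n}. \<forall>x. f t x \<ge> 0 \<longrightarrow> (\<forall>i. (A t *v x) $ i / b $ i \<le> \<gamma>)"
    and gamma_f: "\<forall>t\<in>{1..n}. \<forall>x\<in>ext_dom (f t). f t x \<le> ereal \<gamma> * Pstar n f A b"
    and eps: "0 < \<epsilon>" "\<epsilon> < 1"
    and l_def: "real l = real n * \<epsilon>"
    and sample_le: "2 ^ h * \<epsilon> \<le> 1"
    and Pstar_eq: "Pstar n f A b = ereal P"
    and P_pos: "0 < P"
begin

lemma card_Ph_le_below_Pstar: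
  assumes "W < P"
  shows "card {\<sigma>. \<sigma> permutes {1..n} \<and> Ph \<epsilon> l h \<sigma> f A b \<le> ereal W}
       \<le> fact n * (exp (- (\<epsilon>\<^sup>2 * W / (4 * \<gamma> * P))) + CARD('m) * exp (- (\<epsilon>\<^sup>2 / (6 * \<gamma>))))"
proof -
  have "ereal W < Pstar n f A b" using \<open>W < P\<close> Pstar_eq by simp
  then obtain x v where feasible: "\<forall>i. (\<Sum>t=1..n. A t *v x t) $ i \<le> b $ i"
    and solution_values: "\<forall>t\<in>{1..n}. f t (x t) = ereal (v t) \<and> 0 \<le> v t"
    and resources: "\<forall>t\<in>{1..n}. \<forall>i. 0 \<le> (A t *v x t) $ i"
    and "W < (\<Sum>t=1..n. v t)"
    by (rule Pstar_nonneg_solution_above[OF fG A_nonneg])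
  have value_bound: "v t \<le> \<gamma> * P" if "t \<in> {1..n}" for t
  proof -
    have "f t (x t) = ereal (v t)" using solution_values that by blast
    then show ?thesis
      using gamma_f[rule_format, OF that, of "x t"] unfolding Pstar_eq ext_dom_def by simp
  qed
  have resource_bound: "(A t *v x t) $ i \<le> \<gamma> * b $ i" if "t \<in> {1..n}" for t i
    using gamma_A solution_values b_pos that by (fastforce simp: divide_le_eq mult.commute)
  have "real (card {\<sigma>. \<sigma> permutes {1..n} \<and> Ph \<epsilon> l h \<sigma> f A b \<le> ereal W})
      \<le> card {\<sigma>. \<sigma> permutes {1..n} \<and> Ph \<epsilon> l h \<sigma> f A b \<le> ereal (\<Sum>t=1..n. v t)}"
    using \<open>W < (\<Sum>t=1..n. v t)\<close>
    by (intro of_nat_mono card_mono) (auto simp: finite_permutations intro: order_trans)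
  also have "\<dots> \<le> fact n * (exp (- (\<epsilon>\<^sup>2 * (\<Sum>t=1..n. v t) / (4 * \<gamma> * P)))
                           + CARD('m) * exp (- (\<epsilon>\<^sup>2 / (6 * \<gamma>))))"
    using value_bound resource_bound solution_values resources feasible
      n_pos l_def eps sample_le gamma_pos P_pos b_pos
    by (intro card_Ph_le_solution_value[where x = x and f = f and A = A]) auto
  also have "\<dots> \<le> fact n * (exp (- (\<epsilon>\<^sup>2 * W / (4 * \<gamma> * P))) + CARD('m) * exp (- (\<epsilon>\<^sup>2 / (6 * \<gamma>))))"
    using \<open>W < (\<Sum>t=1..n. v t)\<close> gamma_pos P_pos
    by (intro mult_left_mono add_right_mono) (simp_all add: divide_right_mono mult_left_mono)
  finally show ?thesis .
qed

lemma card_Ph_less_Pstar_le: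
  "card {\<sigma>. \<sigma> permutes {1..n} \<and> Ph \<epsilon> l h \<sigma> f A b < ereal P}
     \<le> fact n * (exp (- (\<epsilon>\<^sup>2 / (4 * \<gamma>))) + CARD('m) * exp (- (\<epsilon>\<^sup>2 / (6 * \<gamma>))))"
proof -
  define E where "E = {\<sigma>. \<sigma> permutes {1..n} \<and> Ph \<epsilon> l h \<sigma> f A b < ereal P}"
  define g where "g W = fact n * (exp (- (\<epsilon>\<^sup>2 * W / (4 * \<gamma> * P))) + CARD('m) * exp (- (\<epsilon>\<^sup>2 / (6 * \<gamma>))))"
    for W
  have "finite E" unfolding E_def by (simp add: finite_permutations)
  moreover have "\<forall>\<sigma>\<in>E. Ph \<epsilon> l h \<sigma> f A b < ereal P" unfolding E_def by simp
  ultimately obtain c where "c < P" and c: "\<forall>\<sigma>\<in>E. Ph \<epsilon> l h \<sigma> f A b \<le> ereal c"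
    by (rule finite_less_ereal_obtains_bound)
  have "real (card E) \<le> g W" if "c < W" "W < P" for W
  proof -
    have "E \<subseteq> {\<sigma>. \<sigma> permutes {1..n} \<and> Ph \<epsilon> l h \<sigma> f A b \<le> ereal W}"
      using c \<open>c < W\<close> unfolding E_def by (auto intro: order_trans[of _ "ereal c"])
    then have "real (card E) \<le> card {\<sigma>. \<sigma> permutes {1..n} \<and> Ph \<epsilon> l h \<sigma> f A b \<le> ereal W}"
      by (intro of_nat_mono card_mono) (simp_all add: finite_permutations)
    also have "\<dots> \<le> g W"
      unfolding g_def using \<open>W < P\<close> by (rule card_Ph_le_below_Pstar)
    finally show ?thesis .
  qed
  moreover have "(g \<longlongrightarrow> g P) (at_left P)"
    unfolding g_def by (intro tendsto_intros) (use P_pos gamma_pos in auto)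
  ultimately have "card E \<le> g P" by (rule le_limit_at_left[OF \<open>c < P\<close>])
  then show ?thesis unfolding E_def g_def using P_pos by simp
qed

end

lemma measure_pmf_of_set_permutes:
  assumes "finite S"
  shows "measure_pmf.prob (pmf_of_set {\<sigma>. \<sigma> permutes S}) X
       = card {\<sigma>. \<sigma> permutes S \<and> \<sigma> \<in> X} / fact (card S)"
proof -
  have "{\<sigma>. \<sigma> permutes S} \<noteq> {}" using permutes_id by blast
  then show ?thesis
    using assms by (simp add: measure_pmf_of_set finite_permutations card_permutations Int_def)
qed

theorem mainTheorem4:
  fixes n L l h :: nat and \<epsilon> \<gamma> :: real
    and f :: "nat \<Rightarrow> real^'k \<Rightarrow> ereal" and A :: "nat \<Rightarrow> real^'k^'m" and b :: "real^'m"
  assumes n_pos: "0 < n"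
    and b_pos: "\<forall>i. 0 < b $ i"
    and fG: "\<forall>t\<in>{1..n}. f t \<in> classG"
    and A_nonneg: "\<forall>t\<in>{1..n}. \<forall>i j. 0 \<le> A t $ i $ j"
    and Pstar_pos: "Pstar n f A b > 0"
    and gamma_pos: "\<gamma> > 0"
    and gamma_A: "\<forall>t\<in>{1..n}. \<forall>x. f t x \<ge> 0 \<longrightarrow> (\<forall>i. (A t *v x) $ i / b $ i \<le> \<gamma>)"
    and gamma_f: "\<forall>t\<in>{1..n}. \<forall>x\<in>ext_dom (f t). f t x \<le> ereal \<gamma> * Pstar n f A b"
    and eps: "0 < \<epsilon>" "\<epsilon> < 1"
    and L_def: "real L = log 2 (1 / \<epsilon>)"
    and l_def: "real l = real n * \<epsilon>"
    and h: "h < L"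
  shows "measure_pmf.prob (pmf_of_set {\<sigma>. \<sigma> permutes {1..n}})
            {\<sigma>. Ph \<epsilon> l h \<sigma> f A b < Pstar n f A b}
         \<le> exp (- ((\<epsilon> ^ 2) / (4 * \<gamma>))) + real CARD('m) * exp (- ((\<epsilon> ^ 2) / (6 * \<gamma>)))"
proof -
  obtain P where P: "Pstar n f A b = ereal P" "0 < P"
    using Pstar_pos Pstar_less_infinity[OF fG] by (cases "Pstar n f A b") auto
  have "card {\<sigma>. \<sigma> permutes {1..n} \<and> Ph \<epsilon> l h \<sigma> f A b < ereal P}
      \<le> fact n * (exp (- (\<epsilon>\<^sup>2 / (4 * \<gamma>))) + CARD('m) * exp (- (\<epsilon>\<^sup>2 / (6 * \<gamma>))))"
    by (rule card_Ph_less_Pstar_le[OF n_pos b_pos fG A_nonneg gamma_pos gamma_A gamma_f eps l_def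
          two_pow_mult_le_one[OF eps(1) L_def h] P])
  then show ?thesis
    unfolding measure_pmf_of_set_permutes[OF finite_atLeastAtMost] P(1)
    by (simp add: divide_le_eq mult.commute)
qed

end
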